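(* Let $\mathcal{D}$ be a dagger category. (1) $\mathcal{D}$ is maximal if and only if every self-adjoint automorphism is iso-positive. (2) $\mathcal{D}$ is minimal if and only if every iso-positive endomorphism is aut-positive.
   Context: A dagger category is a category with an identity-on-objects functor $\dagger$ to its opposite with $f^{\dagger\dagger}=f$. $f$ is self-adjoint if $f^\dagger=f$; an isomorphism $u$ is unitary if $u^\dagger=u^{-1}$. An endomorphism $f\colon c\to c$ is iso-positive if $f=g^\dagger g$ for some isomorphism $g\colon c\to c'$, aut-positive if $f=g^\dagger g$ for some automorphism $g$ of $c$. $\mathcal{D}$ is minimal if the map from unitary-isomorphism classes of objects to isomorphism classes of objects is bijective. $\mathcal{D}$ is maximal if it is dagger-equivalent to a Hermitian completion $\mathrm{Herm}\,\mathcal{C}$ of an anti-involutive category $(\mathcal{C},d,\eta)$ (where $d\colon\mathcal{C}\to\mathcal{C}^{\mathrm{op}}$, $\eta\colon\mathrm{id}\Rightarrow d^2$ with $d(\eta_c)\circ\eta_{dc}=\mathrm{id}$; $\mathrm{Herm}\,\mathcal{C}$ has objects pairs $(c,h)$ with $h\colon c\to dc$ an isomorphism satisfying $d(h)\circ\eta_c=h$, morphisms all morphisms of $\mathcal{C}$, and dagger $f^\dagger=h_1^{-1}\circ d(f)\circ h_2$). *)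

theory Defs
  imports Main
begin

record ('o, 'm) cat =
  Obj :: "'o set"
  Arr :: "'m set"
  Src :: "'m \<Rightarrow> 'o"
  Tgt :: "'m \<Rightarrow> 'o"
  Idn :: "'o \<Rightarrow> 'm"
  Cmp :: "'m \<Rightarrow> 'm \<Rightarrow> 'm"   (* Cmp C g f = g \<circ> f *)

definition hom :: "('o, 'm) cat \<Rightarrow> 'o \<Rightarrow> 'o \<Rightarrow> 'm set" where
  "hom C a b = {f \<in> Arr C. Src C f = a \<and> Tgt C f = b}"

definition category :: "('o, 'm) cat \<Rightarrow> bool" where
  "category C \<longleftrightarrow>
     (\<forall>f\<in>Arr C. Src C f \<in> Obj C \<and> Tgt C f \<in> Obj C) \<and>
     (\<forall>a\<in>Obj C. Idn C a \<in> hom C a a) \<and>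
     (\<forall>f\<in>Arr C. \<forall>g\<in>Arr C. Tgt C f = Src C g \<longrightarrow>
         Cmp C g f \<in> hom C (Src C f) (Tgt C g)) \<and>
     (\<forall>f\<in>Arr C. Cmp C f (Idn C (Src C f)) = f \<and> Cmp C (Idn C (Tgt C f)) f = f) \<and>
     (\<forall>f\<in>Arr C. \<forall>g\<in>Arr C. \<forall>h\<in>Arr C. Tgt C f = Src C g \<longrightarrow> Tgt C g = Src C h \<longrightarrow>
         Cmp C h (Cmp C g f) = Cmp C (Cmp C h g) f)"

definition op :: "('o, 'm) cat \<Rightarrow> ('o, 'm) cat" where
  "op C = C\<lparr>Src := Tgt C, Tgt := Src C, Cmp := (\<lambda>g f. Cmp C f g)\<rparr>"

definition is_inverse :: "('o, 'm) cat \<Rightarrow> 'm \<Rightarrow> 'm \<Rightarrow> bool" where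
  "is_inverse C f g \<longleftrightarrow> g \<in> hom C (Tgt C f) (Src C f) \<and>
     Cmp C g f = Idn C (Src C f) \<and> Cmp C f g = Idn C (Tgt C f)"

definition iso :: "('o, 'm) cat \<Rightarrow> 'm \<Rightarrow> bool" where
  "iso C f \<longleftrightarrow> f \<in> Arr C \<and> (\<exists>g. is_inverse C f g)"

definition inv_arr :: "('o, 'm) cat \<Rightarrow> 'm \<Rightarrow> 'm" where
  "inv_arr C f = (SOME g. is_inverse C f g)"

definition automorphism :: "('o, 'm) cat \<Rightarrow> 'm \<Rightarrow> bool" where
  "automorphism C f \<longleftrightarrow> iso C f \<and> Src C f = Tgt C f"

definition isomorphic_rel :: "('o, 'm) cat \<Rightarrow> ('o \<times> 'o) set" where
  "isomorphic_rel C = {(a, b). a \<in> Obj C \<and> b \<in> Obj C \<and> (\<exists>f\<in>hom C a b. iso C f)}"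

definition is_functor :: "('o, 'm) cat \<Rightarrow> ('p, 'n) cat \<Rightarrow> ('o \<Rightarrow> 'p) \<Rightarrow> ('m \<Rightarrow> 'n) \<Rightarrow> bool" where
  "is_functor C D Fo Fm \<longleftrightarrow> category C \<and> category D \<and>
     (\<forall>a\<in>Obj C. Fo a \<in> Obj D) \<and>
     (\<forall>f\<in>Arr C. Fm f \<in> hom D (Fo (Src C f)) (Fo (Tgt C f))) \<and>
     (\<forall>a\<in>Obj C. Fm (Idn C a) = Idn D (Fo a)) \<and>
     (\<forall>f\<in>Arr C. \<forall>g\<in>Arr C. Tgt C f = Src C g \<longrightarrow> Fm (Cmp C g f) = Cmp D (Fm g) (Fm f))"

definition nat_trans ::
  "('o, 'm) cat \<Rightarrow> ('p, 'n) cat \<Rightarrow> ('o \<Rightarrow> 'p) \<Rightarrow> ('m \<Rightarrow> 'n) \<Rightarrow> ('o \<Rightarrow> 'p) \<Rightarrow> ('m \<Rightarrow> 'n)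
     \<Rightarrow> ('o \<Rightarrow> 'n) \<Rightarrow> bool" where
  "nat_trans C D Fo Fm Go Gm \<alpha> \<longleftrightarrow> is_functor C D Fo Fm \<and> is_functor C D Go Gm \<and>
     (\<forall>a\<in>Obj C. \<alpha> a \<in> hom D (Fo a) (Go a)) \<and>
     (\<forall>f\<in>Arr C. Cmp D (\<alpha> (Tgt C f)) (Fm f) = Cmp D (Gm f) (\<alpha> (Src C f)))"

definition dagger_cat :: "('o, 'm) cat \<Rightarrow> ('m \<Rightarrow> 'm) \<Rightarrow> bool" where
  "dagger_cat D dag \<longleftrightarrow> is_functor D (op D) id dag \<and> (\<forall>f\<in>Arr D. dag (dag f) = f)"

definition self_adjoint :: "('o, 'm) cat \<Rightarrow> ('m \<Rightarrow> 'm) \<Rightarrow> 'm \<Rightarrow> bool" where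
  "self_adjoint D dag f \<longleftrightarrow> f \<in> Arr D \<and> dag f = f"

definition unitary :: "('o, 'm) cat \<Rightarrow> ('m \<Rightarrow> 'm) \<Rightarrow> 'm \<Rightarrow> bool" where
  "unitary D dag u \<longleftrightarrow> iso D u \<and> dag u = inv_arr D u"

definition iso_positive :: "('o, 'm) cat \<Rightarrow> ('m \<Rightarrow> 'm) \<Rightarrow> 'm \<Rightarrow> bool" where
  "iso_positive D dag f \<longleftrightarrow> f \<in> Arr D \<and> Src D f = Tgt D f \<and>
     (\<exists>g. iso D g \<and> Src D g = Src D f \<and> f = Cmp D (dag g) g)"

definition aut_positive :: "('o, 'm) cat \<Rightarrow> ('m \<Rightarrow> 'm) \<Rightarrow> 'm \<Rightarrow> bool" where
  "aut_positive D dag f \<longleftrightarrow> f \<in> Arr D \<and> Src D f = Tgt D f \<and>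
     (\<exists>g. automorphism D g \<and> Src D g = Src D f \<and> f = Cmp D (dag g) g)"

definition unitary_rel :: "('o, 'm) cat \<Rightarrow> ('m \<Rightarrow> 'm) \<Rightarrow> ('o \<times> 'o) set" where
  "unitary_rel D dag = {(a, b). a \<in> Obj D \<and> b \<in> Obj D \<and> (\<exists>u\<in>hom D a b. unitary D dag u)}"

definition minimal :: "('o, 'm) cat \<Rightarrow> ('m \<Rightarrow> 'm) \<Rightarrow> bool" where
  "minimal D dag \<longleftrightarrow>
     bij_betw (\<lambda>X. isomorphic_rel D `` X) (Obj D // unitary_rel D dag) (Obj D // isomorphic_rel D)"

definition dagger_functor ::
  "('o, 'm) cat \<Rightarrow> ('m \<Rightarrow> 'm) \<Rightarrow> ('p, 'n) cat \<Rightarrow> ('n \<Rightarrow> 'n) \<Rightarrow> ('o \<Rightarrow> 'p) \<Rightarrow> ('m \<Rightarrow> 'n) \<Rightarrow> bool" where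
  "dagger_functor D dD E dE Fo Fm \<longleftrightarrow> is_functor D E Fo Fm \<and> (\<forall>f\<in>Arr D. Fm (dD f) = dE (Fm f))"

definition dagger_equivalent ::
  "('o, 'm) cat \<Rightarrow> ('m \<Rightarrow> 'm) \<Rightarrow> ('p, 'n) cat \<Rightarrow> ('n \<Rightarrow> 'n) \<Rightarrow> bool" where
  "dagger_equivalent D dD E dE \<longleftrightarrow>
     (\<exists>Fo Fm Go Gm \<eta> \<epsilon>.
        dagger_functor D dD E dE Fo Fm \<and> dagger_functor E dE D dD Go Gm \<and>
        nat_trans D D id id (Go \<circ> Fo) (Gm \<circ> Fm) \<eta> \<and> (\<forall>a\<in>Obj D. unitary D dD (\<eta> a)) \<and>
        nat_trans E E (Fo \<circ> Go) (Fm \<circ> Gm) id id \<epsilon> \<and> (\<forall>b\<in>Obj E. unitary E dE (\<epsilon> b)))"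

definition anti_involutive ::
  "('o, 'm) cat \<Rightarrow> ('o \<Rightarrow> 'o) \<Rightarrow> ('m \<Rightarrow> 'm) \<Rightarrow> ('o \<Rightarrow> 'm) \<Rightarrow> bool" where
  "anti_involutive C do dm \<eta> \<longleftrightarrow> category C \<and> is_functor C (op C) do dm \<and>
     nat_trans C C id id (do \<circ> do) (dm \<circ> dm) \<eta> \<and>
     (\<forall>c\<in>Obj C. Cmp C (dm (\<eta> c)) (\<eta> (do c)) = Idn C (do c))"

definition herm_obj :: "('o, 'm) cat \<Rightarrow> ('o \<Rightarrow> 'o) \<Rightarrow> ('m \<Rightarrow> 'm) \<Rightarrow> ('o \<Rightarrow> 'm) \<Rightarrow> ('o \<times> 'm) set" where
  "herm_obj C do dm \<eta> = {(c, h). c \<in> Obj C \<and> h \<in> hom C c (do c) \<and> iso C h \<and> Cmp C (dm h) (\<eta> c) = h}"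

definition Herm :: "('o, 'm) cat \<Rightarrow> ('o \<Rightarrow> 'o) \<Rightarrow> ('m \<Rightarrow> 'm) \<Rightarrow> ('o \<Rightarrow> 'm)
    \<Rightarrow> ('o \<times> 'm, ('o \<times> 'm) \<times> 'm \<times> ('o \<times> 'm)) cat" where
  "Herm C do dm \<eta> =
     \<lparr> Obj = herm_obj C do dm \<eta>,
       Arr = {(x, f, y). x \<in> herm_obj C do dm \<eta> \<and> y \<in> herm_obj C do dm \<eta> \<and> f \<in> hom C (fst x) (fst y)},
       Src = (\<lambda>(x, f, y). x),
       Tgt = (\<lambda>(x, f, y). y),
       Idn = (\<lambda>x. (x, Idn C (fst x), x)),
       Cmp = (\<lambda>(y, g, z) (x, f, y'). (x, Cmp C g f, z)) \<rparr>"

definition herm_dag :: "('o, 'm) cat \<Rightarrow> ('m \<Rightarrow> 'm)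
    \<Rightarrow> ('o \<times> 'm) \<times> 'm \<times> ('o \<times> 'm) \<Rightarrow> ('o \<times> 'm) \<times> 'm \<times> ('o \<times> 'm)" where
  "herm_dag C dm = (\<lambda>(x, f, y). (y, Cmp C (inv_arr C (snd x)) (Cmp C (dm f) (snd y)), x))"

definition herm_model ::
  "('p, 'n) cat \<Rightarrow> ('n \<Rightarrow> 'n) \<Rightarrow> ('o, 'm) cat \<Rightarrow> ('o \<Rightarrow> 'o) \<Rightarrow> ('m \<Rightarrow> 'm) \<Rightarrow> ('o \<Rightarrow> 'm) \<Rightarrow> bool" where
  "herm_model D dag C do dm \<eta> \<longleftrightarrow> anti_involutive C do dm \<eta> \<and>
     dagger_equivalent D dag (Herm C do dm \<eta>) (herm_dag C dm)"

end

theory Submission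
  imports Defs
begin

text \<open>
  Minimality says exactly that isomorphic objects are unitarily isomorphic. For an isomorphism
  \<open>g : a \<rightarrow> b\<close>, composing \<open>g\<close> with a unitary \<open>b \<rightarrow> a\<close> gives an automorphism
  with the same \<open>g\<^sup>\<dagger> g\<close>; conversely, if \<open>g\<^sup>\<dagger> g = k\<^sup>\<dagger> k\<close> for an automorphism
  \<open>k\<close> of \<open>a\<close>, then \<open>g k\<^sup>-\<^sup>1\<close> is unitary.

  In a Hermitian completion a self-adjoint automorphism \<open>f\<close> of \<open>(c, h)\<close> satisfies
  \<open>h f = d(f) h\<close>, so \<open>(c, h f)\<close> is again an object, and the identity of \<open>c\<close>, read as a
  morphism \<open>(c, h) \<rightarrow> (c, h f)\<close>, is an isomorphism \<open>g\<close> with \<open>g\<^sup>\<dagger> g = f\<close>. Dagger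
  functors preserve this, and conjugating by the unitary unit of a dagger equivalence carries it
  back. Conversely, if all self-adjoint automorphisms are iso-positive, every object
  \<open>(a, h)\<close> of the Hermitian completion of \<open>(D, \<dagger>, id)\<close> has a root \<open>h = g\<^sup>\<dagger> g\<close>,
  and \<open>(a, h) \<mapsto> tgt g\<close>, \<open>f \<mapsto> g\<^sub>2 f g\<^sub>1\<^sup>-\<^sup>1\<close> is a dagger functor inverse to
  \<open>a \<mapsto> (a, id)\<close> up to the unitary counit \<open>g\<^sup>-\<^sup>1\<close>.
\<close>

lemma refines_quotient_bij_iff:
  assumes RS: "R \<subseteq> S" and R: "equiv A R" and S: "equiv A S"
  shows "bij_betw (\<lambda>X. S `` X) (A // R) (A // S) \<longleftrightarrow> S \<subseteq> R"
proof -
  have "inj_on (\<lambda>X. S `` X) (A // R) \<longleftrightarrow> S \<subseteq> R"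
  proof
    assume inj: "inj_on (\<lambda>X. S `` X) (A // R)"
    show "S \<subseteq> R"
    proof (clarify)
      fix a b assume ab: "(a, b) \<in> S"
      then have a: "a \<in> A" and b: "b \<in> A" using equiv_type[OF S] by auto
      have "S `` (R `` {a}) = S `` (R `` {b})"
        using ab a b S by (simp add: refines_equiv_class_eq2[OF RS R S] eq_equiv_class_iff)
      then have "R `` {a} = R `` {b}" using inj a b by (meson inj_onD quotientI)
      then show "(a, b) \<in> R" using eq_equiv_class_iff[OF R a b] by simp
    qed
  next
    assume SR: "S \<subseteq> R"
    show "inj_on (\<lambda>X. S `` X) (A // R)"
    proof (rule inj_onI)
      fix X Y assume X: "X \<in> A // R" and Y: "Y \<in> A // R" and XY: "S `` X = S `` Y"
      obtain a where a: "a \<in> A" "X = R `` {a}" using X by (auto elim: quotientE)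
      obtain b where b: "b \<in> A" "Y = R `` {b}" using Y by (auto elim: quotientE)
      have "(a, b) \<in> S"
        using XY a b eq_equiv_class_iff[OF S] by (simp add: refines_equiv_class_eq2[OF RS R S])
      then show "X = Y" using SR a b equiv_class_eq[OF R] by auto
    qed
  qed
  then show ?thesis
    by (simp add: bij_betw_def refines_equiv_image_eq[OF RS R S])
qed

section \<open>Categories, isomorphisms and functors\<close>

lemma op_simps [simp]:
  "Obj (op C) = Obj C" "Arr (op C) = Arr C" "Src (op C) = Tgt C" "Tgt (op C) = Src C"
  "Idn (op C) = Idn C" "Cmp (op C) g f = Cmp C f g"
  by (simp_all add: op_def)

lemma hom_iff: "f \<in> hom C a b \<longleftrightarrow> f \<in> Arr C \<and> Src C f = a \<and> Tgt C f = b"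
  by (simp add: hom_def)

lemma cat_src_obj [simp]: "category C \<Longrightarrow> f \<in> Arr C \<Longrightarrow> Src C f \<in> Obj C"
  and cat_tgt_obj [simp]: "category C \<Longrightarrow> f \<in> Arr C \<Longrightarrow> Tgt C f \<in> Obj C"
  and cat_idn_arr [simp]: "category C \<Longrightarrow> a \<in> Obj C \<Longrightarrow> Idn C a \<in> Arr C"
  and cat_idn_src [simp]: "category C \<Longrightarrow> a \<in> Obj C \<Longrightarrow> Src C (Idn C a) = a"
  and cat_idn_tgt [simp]: "category C \<Longrightarrow> a \<in> Obj C \<Longrightarrow> Tgt C (Idn C a) = a"
  and cat_cmp_arr [simp]:
    "category C \<Longrightarrow> f \<in> Arr C \<Longrightarrow> g \<in> Arr C \<Longrightarrow> Tgt C f = Src C g \<Longrightarrow> Cmp C g f \<in> Arr C"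
  and cat_cmp_src [simp]:
    "category C \<Longrightarrow> f \<in> Arr C \<Longrightarrow> g \<in> Arr C \<Longrightarrow> Tgt C f = Src C g \<Longrightarrow> Src C (Cmp C g f) = Src C f"
  and cat_cmp_tgt [simp]:
    "category C \<Longrightarrow> f \<in> Arr C \<Longrightarrow> g \<in> Arr C \<Longrightarrow> Tgt C f = Src C g \<Longrightarrow> Tgt C (Cmp C g f) = Tgt C g"
  and cat_idn_left [simp]: "category C \<Longrightarrow> f \<in> Arr C \<Longrightarrow> Tgt C f = b \<Longrightarrow> Cmp C (Idn C b) f = f"
  and cat_idn_right [simp]: "category C \<Longrightarrow> f \<in> Arr C \<Longrightarrow> Src C f = a \<Longrightarrow> Cmp C f (Idn C a) = f"
  unfolding category_def hom_def by blast+

lemma cat_cmp_assoc [simp]: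
  "category C \<Longrightarrow> f \<in> Arr C \<Longrightarrow> g \<in> Arr C \<Longrightarrow> h \<in> Arr C \<Longrightarrow> Tgt C f = Src C g \<Longrightarrow>
    Tgt C g = Src C h \<Longrightarrow> Cmp C (Cmp C h g) f = Cmp C h (Cmp C g f)"
  unfolding category_def by metis

lemma category_op: "category C \<Longrightarrow> category (op C)"
  unfolding category_def hom_def by auto

lemma is_inverseD:
  "is_inverse C f g \<Longrightarrow> g \<in> Arr C \<and> Src C g = Tgt C f \<and> Tgt C g = Src C f \<and>
    Cmp C g f = Idn C (Src C f) \<and> Cmp C f g = Idn C (Tgt C f)"
  by (simp add: is_inverse_def hom_def)

lemma is_inverse_sym: "is_inverse C f g \<Longrightarrow> f \<in> Arr C \<Longrightarrow> is_inverse C g f"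
  by (auto simp: is_inverse_def hom_def)

lemma is_inverse_inv_arr: "iso C f \<Longrightarrow> is_inverse C f (inv_arr C f)"
  unfolding iso_def inv_arr_def by (metis someI)

lemma is_inverse_unique:
  assumes "category C" "f \<in> Arr C" "is_inverse C f g" "is_inverse C f g'"
  shows "g = g'"
proof -
  note inv = is_inverseD[OF assms(3)] is_inverseD[OF assms(4)]
  have "g = Cmp C g (Cmp C f g')" using inv assms(1,2) by simp
  also have "\<dots> = Cmp C (Cmp C g f) g'" using inv assms(1,2) by (metis cat_cmp_assoc)
  also have "\<dots> = g'" using inv assms(1,2) by (simp del: cat_cmp_assoc)
  finally show ?thesis .
qed

lemma inv_arr_eqI: "category C \<Longrightarrow> f \<in> Arr C \<Longrightarrow> is_inverse C f g \<Longrightarrow> inv_arr C f = g"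
  by (meson is_inverse_unique iso_def is_inverse_inv_arr)

lemma iso_arr [simp]: "iso C f \<Longrightarrow> f \<in> Arr C"
  by (simp add: iso_def)

lemma inv_arr_arr [simp]: "iso C f \<Longrightarrow> inv_arr C f \<in> Arr C"
  and inv_arr_src [simp]: "iso C f \<Longrightarrow> Src C (inv_arr C f) = Tgt C f"
  and inv_arr_tgt [simp]: "iso C f \<Longrightarrow> Tgt C (inv_arr C f) = Src C f"
  and inv_arr_cmp_self [simp]: "iso C f \<Longrightarrow> Cmp C (inv_arr C f) f = Idn C (Src C f)"
  and cmp_inv_arr_self [simp]: "iso C f \<Longrightarrow> Cmp C f (inv_arr C f) = Idn C (Tgt C f)"
  using is_inverseD[OF is_inverse_inv_arr[of C f]] by auto

lemma inv_arr_cancel_left [simp]: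
  "category C \<Longrightarrow> iso C f \<Longrightarrow> x \<in> Arr C \<Longrightarrow> Tgt C x = Src C f \<Longrightarrow>
    Cmp C (inv_arr C f) (Cmp C f x) = x"
  and cmp_inv_arr_cancel_left [simp]:
  "category C \<Longrightarrow> iso C f \<Longrightarrow> x \<in> Arr C \<Longrightarrow> Tgt C x = Tgt C f \<Longrightarrow>
    Cmp C f (Cmp C (inv_arr C f) x) = x"
  by (simp_all flip: cat_cmp_assoc)

lemma iso_inv_arr [simp]: "iso C f \<Longrightarrow> iso C (inv_arr C f)"
  using is_inverse_sym iso_def is_inverse_inv_arr by fastforce

lemma inv_arr_inv_arr [simp]: "category C \<Longrightarrow> iso C f \<Longrightarrow> inv_arr C (inv_arr C f) = f"
  by (meson inv_arr_eqI is_inverse_sym iso_arr is_inverse_inv_arr inv_arr_arr)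

lemma is_inverse_idn: "category C \<Longrightarrow> a \<in> Obj C \<Longrightarrow> is_inverse C (Idn C a) (Idn C a)"
  by (simp add: is_inverse_def hom_def)

lemma iso_idn [simp]: "category C \<Longrightarrow> a \<in> Obj C \<Longrightarrow> iso C (Idn C a)"
  using is_inverse_idn iso_def by fastforce

lemma inv_arr_idn [simp]: "category C \<Longrightarrow> a \<in> Obj C \<Longrightarrow> inv_arr C (Idn C a) = Idn C a"
  by (simp add: inv_arr_eqI is_inverse_idn)

lemma is_inverse_cmp:
  "category C \<Longrightarrow> iso C f \<Longrightarrow> iso C g \<Longrightarrow> Tgt C f = Src C g \<Longrightarrow>
    is_inverse C (Cmp C g f) (Cmp C (inv_arr C f) (inv_arr C g))"
  by (simp add: is_inverse_def hom_def)

lemma iso_cmp [simp]: "category C \<Longrightarrow> iso C f \<Longrightarrow> iso C g \<Longrightarrow> Tgt C f = Src C g \<Longrightarrow> iso C (Cmp C g f)"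
  by (metis is_inverse_cmp iso_def cat_cmp_arr iso_arr)

lemma inv_arr_cmp [simp]:
  "category C \<Longrightarrow> iso C f \<Longrightarrow> iso C g \<Longrightarrow> Tgt C f = Src C g \<Longrightarrow>
    inv_arr C (Cmp C g f) = Cmp C (inv_arr C f) (inv_arr C g)"
  by (simp add: inv_arr_eqI is_inverse_cmp)

lemma isomorphic_rel_equiv: "category C \<Longrightarrow> equiv (Obj C) (isomorphic_rel C)"
proof (rule equivI)
  assume C: "category C"
  show "isomorphic_rel C \<subseteq> Obj C \<times> Obj C"
    by (auto simp: isomorphic_rel_def)
  show "refl_on (Obj C) (isomorphic_rel C)"
  proof (rule refl_onI)
    fix a assume "a \<in> Obj C"
    then show "(a, a) \<in> isomorphic_rel C"
      using C by (auto simp: isomorphic_rel_def hom_iff intro!: bexI[of _ "Idn C a"])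
  qed
  show "sym (isomorphic_rel C)"
  proof (rule symI)
    fix a b assume "(a, b) \<in> isomorphic_rel C"
    then obtain f where "f \<in> hom C a b" "iso C f" "a \<in> Obj C" "b \<in> Obj C"
      by (auto simp: isomorphic_rel_def)
    then show "(b, a) \<in> isomorphic_rel C"
      by (auto simp: isomorphic_rel_def hom_iff intro!: bexI[of _ "inv_arr C f"])
  qed
  show "trans (isomorphic_rel C)"
  proof (rule transI)
    fix a b c assume "(a, b) \<in> isomorphic_rel C" "(b, c) \<in> isomorphic_rel C"
    then obtain f g where "f \<in> hom C a b" "iso C f" "g \<in> hom C b c" "iso C g" "a \<in> Obj C" "c \<in> Obj C"
      by (auto simp: isomorphic_rel_def)
    then show "(a, c) \<in> isomorphic_rel C"
      using C by (auto simp: isomorphic_rel_def hom_iff intro!: bexI[of _ "Cmp C g f"])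
  qed
qed

lemma functor_category_dom: "is_functor C D Fo Fm \<Longrightarrow> category C"
  and functor_category_cod: "is_functor C D Fo Fm \<Longrightarrow> category D"
  and functor_obj: "is_functor C D Fo Fm \<Longrightarrow> a \<in> Obj C \<Longrightarrow> Fo a \<in> Obj D"
  and functor_arr: "is_functor C D Fo Fm \<Longrightarrow> f \<in> Arr C \<Longrightarrow> Fm f \<in> Arr D"
  and functor_src: "is_functor C D Fo Fm \<Longrightarrow> f \<in> Arr C \<Longrightarrow> Src D (Fm f) = Fo (Src C f)"
  and functor_tgt: "is_functor C D Fo Fm \<Longrightarrow> f \<in> Arr C \<Longrightarrow> Tgt D (Fm f) = Fo (Tgt C f)"
  and functor_idn: "is_functor C D Fo Fm \<Longrightarrow> a \<in> Obj C \<Longrightarrow> Fm (Idn C a) = Idn D (Fo a)"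
  and functor_cmp: "is_functor C D Fo Fm \<Longrightarrow> f \<in> Arr C \<Longrightarrow> g \<in> Arr C \<Longrightarrow> Tgt C f = Src C g \<Longrightarrow>
     Fm (Cmp C g f) = Cmp D (Fm g) (Fm f)"
  by (simp_all add: is_functor_def hom_def)

lemma functor_is_inverse:
  assumes F: "is_functor C D Fo Fm" and f: "f \<in> Arr C" and fg: "is_inverse C f g"
  shows "is_inverse D (Fm f) (Fm g)"
proof -
  note g = is_inverseD[OF fg]
  have "Cmp D (Fm g) (Fm f) = Fm (Idn C (Src C f))" "Cmp D (Fm f) (Fm g) = Fm (Idn C (Tgt C f))"
    using f g by (metis functor_cmp[OF F])+
  then show ?thesis
    using f g functor_category_dom[OF F]
    by (simp add: is_inverse_def hom_iff functor_arr[OF F] functor_src[OF F] functor_tgt[OF F]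
        functor_idn[OF F])
qed

lemma functor_iso: "is_functor C D Fo Fm \<Longrightarrow> iso C f \<Longrightarrow> iso D (Fm f)"
  by (meson functor_arr functor_is_inverse iso_def)

lemma functor_inv_arr: "is_functor C D Fo Fm \<Longrightarrow> iso C f \<Longrightarrow> inv_arr D (Fm f) = Fm (inv_arr C f)"
  by (meson functor_arr functor_category_cod functor_is_inverse inv_arr_eqI iso_arr is_inverse_inv_arr)

lemma functor_automorphism: "is_functor C D Fo Fm \<Longrightarrow> automorphism C f \<Longrightarrow> automorphism D (Fm f)"
  by (simp add: automorphism_def functor_iso functor_src functor_tgt)

lemma id_functor: "category C \<Longrightarrow> is_functor C C id id"
  by (simp add: is_functor_def hom_def)

lemma comp_functor:
  assumes F: "is_functor A B Fo Fm" and G: "is_functor B C Go Gm"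
  shows "is_functor A C (Go \<circ> Fo) (Gm \<circ> Fm)"
  using functor_category_dom[OF F] functor_category_cod[OF G]
  by (auto simp: is_functor_def hom_iff functor_obj[OF F] functor_obj[OF G] functor_arr[OF F]
      functor_arr[OF G] functor_src[OF F] functor_src[OF G] functor_tgt[OF F] functor_tgt[OF G]
      functor_idn[OF F] functor_idn[OF G] functor_cmp[OF F] functor_cmp[OF G])

lemma nat_trans_component: "nat_trans C D Fo Fm Go Gm \<alpha> \<Longrightarrow> a \<in> Obj C \<Longrightarrow> \<alpha> a \<in> hom D (Fo a) (Go a)"
  and nat_trans_naturality: "nat_trans C D Fo Fm Go Gm \<alpha> \<Longrightarrow> f \<in> Arr C \<Longrightarrow>
     Cmp D (\<alpha> (Tgt C f)) (Fm f) = Cmp D (Gm f) (\<alpha> (Src C f))"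
  by (simp_all add: nat_trans_def)

lemma is_inverse_op [simp]: "is_inverse (op C) f g = is_inverse C f g"
  by (auto simp: is_inverse_def hom_def)

lemma iso_op [simp]: "iso (op C) f = iso C f"
  by (simp add: iso_def)

lemma inv_arr_op [simp]: "inv_arr (op C) f = inv_arr C f"
  by (simp add: inv_arr_def)

lemma cofunctor_arr [simp]: "is_functor C (op C) Fo Fm \<Longrightarrow> f \<in> Arr C \<Longrightarrow> Fm f \<in> Arr C"
  and cofunctor_src [simp]: "is_functor C (op C) Fo Fm \<Longrightarrow> f \<in> Arr C \<Longrightarrow> Src C (Fm f) = Fo (Tgt C f)"
  and cofunctor_tgt [simp]: "is_functor C (op C) Fo Fm \<Longrightarrow> f \<in> Arr C \<Longrightarrow> Tgt C (Fm f) = Fo (Src C f)"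
  and cofunctor_idn [simp]: "is_functor C (op C) Fo Fm \<Longrightarrow> a \<in> Obj C \<Longrightarrow> Fm (Idn C a) = Idn C (Fo a)"
  and cofunctor_cmp [simp]: "is_functor C (op C) Fo Fm \<Longrightarrow> f \<in> Arr C \<Longrightarrow> g \<in> Arr C \<Longrightarrow>
     Tgt C f = Src C g \<Longrightarrow> Fm (Cmp C g f) = Cmp C (Fm f) (Fm g)"
  by (simp_all add: is_functor_def hom_def)

lemma cofunctor_iso [simp]: "is_functor C (op C) Fo Fm \<Longrightarrow> iso C f \<Longrightarrow> iso C (Fm f)"
  using functor_iso[of C "op C" Fo Fm f] by simp

lemma cofunctor_inv_arr [simp]:
  "is_functor C (op C) Fo Fm \<Longrightarrow> iso C f \<Longrightarrow> Fm (inv_arr C f) = inv_arr C (Fm f)"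
  using functor_inv_arr[of C "op C" Fo Fm f] by simp

section \<open>Dagger categories\<close>

locale dagger_category =
  fixes D :: "('o, 'm) cat" and dag :: "'m \<Rightarrow> 'm"
  assumes dagger: "dagger_cat D dag"
begin

lemma is_category [simp]: "category D"
  and dag_functor: "is_functor D (op D) id dag"
  and dag_dag [simp]: "f \<in> Arr D \<Longrightarrow> dag (dag f) = f"
  using dagger unfolding dagger_cat_def is_functor_def by blast+

lemma dag_arr [simp]: "f \<in> Arr D \<Longrightarrow> dag f \<in> Arr D"
  and dag_src [simp]: "f \<in> Arr D \<Longrightarrow> Src D (dag f) = Tgt D f"
  and dag_tgt [simp]: "f \<in> Arr D \<Longrightarrow> Tgt D (dag f) = Src D f"
  and dag_idn [simp]: "a \<in> Obj D \<Longrightarrow> dag (Idn D a) = Idn D a"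
  and dag_cmp [simp]: "f \<in> Arr D \<Longrightarrow> g \<in> Arr D \<Longrightarrow> Tgt D f = Src D g \<Longrightarrow>
     dag (Cmp D g f) = Cmp D (dag f) (dag g)"
  and dag_iso [simp]: "iso D f \<Longrightarrow> iso D (dag f)"
  and dag_inv_arr [simp]: "iso D f \<Longrightarrow> dag (inv_arr D f) = inv_arr D (dag f)"
  using dag_functor by simp_all

lemma unitary_idn: "a \<in> Obj D \<Longrightarrow> unitary D dag (Idn D a)"
  and unitary_inv_arr: "unitary D dag u \<Longrightarrow> unitary D dag (inv_arr D u)"
  and unitary_cmp: "unitary D dag u \<Longrightarrow> unitary D dag v \<Longrightarrow> Tgt D u = Src D v \<Longrightarrow>
     unitary D dag (Cmp D v u)"
  by (simp_all add: unitary_def)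

lemma unitary_rel_equiv: "equiv (Obj D) (unitary_rel D dag)"
proof (rule equivI)
  show "unitary_rel D dag \<subseteq> Obj D \<times> Obj D"
    by (auto simp: unitary_rel_def)
  show "refl_on (Obj D) (unitary_rel D dag)"
  proof (rule refl_onI)
    fix a assume "a \<in> Obj D"
    then show "(a, a) \<in> unitary_rel D dag"
      by (auto simp: unitary_rel_def hom_iff unitary_idn intro!: bexI[of _ "Idn D a"])
  qed
  show "sym (unitary_rel D dag)"
  proof (rule symI)
    fix a b assume "(a, b) \<in> unitary_rel D dag"
    then obtain u where "u \<in> hom D a b" "unitary D dag u" "a \<in> Obj D" "b \<in> Obj D"
      by (auto simp: unitary_rel_def)
    then show "(b, a) \<in> unitary_rel D dag"
      using unitary_inv_arr
      by (auto simp: unitary_rel_def hom_iff unitary_def intro!: bexI[of _ "inv_arr D u"])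
  qed
  show "trans (unitary_rel D dag)"
  proof (rule transI)
    fix a b c assume "(a, b) \<in> unitary_rel D dag" "(b, c) \<in> unitary_rel D dag"
    then obtain u v where "u \<in> hom D a b" "unitary D dag u" "v \<in> hom D b c" "unitary D dag v"
      "a \<in> Obj D" "c \<in> Obj D"
      by (auto simp: unitary_rel_def)
    then show "(a, c) \<in> unitary_rel D dag"
      using unitary_cmp[of u v]
      by (auto simp: unitary_rel_def hom_iff unitary_def intro!: bexI[of _ "Cmp D v u"])
  qed
qed

lemma minimal_iff_isomorphic_imp_unitary:
  "minimal D dag \<longleftrightarrow> isomorphic_rel D \<subseteq> unitary_rel D dag"
  unfolding minimal_def
  by (rule refines_quotient_bij_iff[OF _ unitary_rel_equiv isomorphic_rel_equiv[OF is_category]])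
    (auto simp: unitary_rel_def isomorphic_rel_def unitary_def)

lemma positive_cmp_unitary:
  "unitary D dag u \<Longrightarrow> g \<in> Arr D \<Longrightarrow> Tgt D g = Src D u \<Longrightarrow>
    Cmp D (dag (Cmp D u g)) (Cmp D u g) = Cmp D (dag g) g"
  by (simp add: unitary_def)

lemma unitary_of_positive_eq:
  assumes g: "iso D g" and k: "iso D k" and "Src D k = Src D g"
    and gk: "Cmp D (dag g) g = Cmp D (dag k) k"
  shows "unitary D dag (Cmp D g (inv_arr D k))"
proof -
  have "dag g = Cmp D (Cmp D (dag g) g) (inv_arr D g)"
    using g by simp
  also have "\<dots> = Cmp D (dag k) (Cmp D k (inv_arr D g))"
    using g k assms(3) by (simp add: gk)
  finally have dag_g: "dag g = Cmp D (dag k) (Cmp D k (inv_arr D g))" .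
  have "dag (Cmp D g (inv_arr D k)) = Cmp D (inv_arr D (dag k)) (dag g)"
    using g k assms(3) by simp
  also have "\<dots> = Cmp D k (inv_arr D g)"
    unfolding dag_g using g k assms(3) by simp
  finally show ?thesis
    using g k assms(3) by (simp add: unitary_def)
qed

lemma minimal_iff_iso_positive_imp_aut_positive:
  "minimal D dag \<longleftrightarrow> (\<forall>f. iso_positive D dag f \<longrightarrow> aut_positive D dag f)"
  unfolding minimal_iff_isomorphic_imp_unitary
proof (intro iffI allI impI subsetI)
  fix f assume iu: "isomorphic_rel D \<subseteq> unitary_rel D dag" and "iso_positive D dag f"
  then obtain g where f: "f \<in> Arr D" "Src D f = Tgt D f" "f = Cmp D (dag g) g"
    and g: "iso D g" "Src D g = Src D f"
    unfolding iso_positive_def by blast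
  have "(Tgt D g, Src D g) \<in> isomorphic_rel D"
    using g(1) by (auto simp: isomorphic_rel_def hom_iff intro!: bexI[of _ "inv_arr D g"])
  then obtain u where u: "unitary D dag u" "u \<in> hom D (Tgt D g) (Src D g)"
    using iu by (auto simp: unitary_rel_def)
  have "automorphism D (Cmp D u g)"
    using g u by (simp add: automorphism_def unitary_def hom_iff)
  moreover have "f = Cmp D (dag (Cmp D u g)) (Cmp D u g)"
    unfolding f(3) using g u by (intro positive_cmp_unitary[symmetric]) (auto simp: hom_iff)
  moreover have "Src D (Cmp D u g) = Src D f"
    using g u by (simp add: hom_iff)
  ultimately show "aut_positive D dag f"
    unfolding aut_positive_def using f(1,2) by (intro conjI exI[of _ "Cmp D u g"]) simp_all
next
  fix p assume ap: "\<forall>f. iso_positive D dag f \<longrightarrow> aut_positive D dag f" and "p \<in> isomorphic_rel D"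
  then obtain a b g where p: "p = (a, b)" "a \<in> Obj D" "b \<in> Obj D" and g: "iso D g" "g \<in> hom D a b"
    by (auto simp: isomorphic_rel_def)
  have "iso_positive D dag (Cmp D (dag g) g)"
    using g by (auto simp: iso_positive_def hom_iff)
  then have "aut_positive D dag (Cmp D (dag g) g)"
    using ap by blast
  then obtain k where k: "automorphism D k" "Src D k = a" "Cmp D (dag g) g = Cmp D (dag k) k"
    using g by (auto simp: aut_positive_def hom_iff)
  have "unitary D dag (Cmp D g (inv_arr D k))"
    using g k by (intro unitary_of_positive_eq) (auto simp: automorphism_def hom_iff)
  moreover have "Cmp D g (inv_arr D k) \<in> hom D a b"
    using g k by (simp add: automorphism_def hom_iff)
  ultimately show "p \<in> unitary_rel D dag"
    using p by (auto simp: unitary_rel_def)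
qed

lemma iso_positive_unitary_conj:
  assumes u: "unitary D dag u" and p: "iso_positive D dag p" and up: "Tgt D u = Src D p"
  shows "iso_positive D dag (Cmp D (inv_arr D u) (Cmp D p u))"
proof -
  obtain g where g: "iso D g" "Src D g = Src D p" "p = Cmp D (dag g) g"
    using p by (auto simp: iso_positive_def)
  have "Cmp D (dag (Cmp D g u)) (Cmp D g u) = Cmp D (inv_arr D u) (Cmp D p u)"
    using u g up by (simp add: unitary_def)
  then show ?thesis
    using u g up p by (auto simp: iso_positive_def unitary_def intro!: exI[of _ "Cmp D g u"])
qed

end

lemma dagger_functor_is_functor: "dagger_functor D dD E dE Fo Fm \<Longrightarrow> is_functor D E Fo Fm"
  by (simp add: dagger_functor_def)

lemma dagger_functor_self_adjoint:
  "dagger_functor D dD E dE Fo Fm \<Longrightarrow> self_adjoint D dD f \<Longrightarrow> self_adjoint E dE (Fm f)"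
  by (metis dagger_functor_def functor_arr self_adjoint_def)

lemma dagger_functor_iso_positive:
  assumes E: "dagger_cat E dE" and G: "dagger_functor E dE D dD Go Gm" and p: "iso_positive E dE p"
  shows "iso_positive D dD (Gm p)"
proof -
  interpret E: dagger_category E dE by unfold_locales (fact E)
  have Gf: "is_functor E D Go Gm" and Gdag: "\<And>f. f \<in> Arr E \<Longrightarrow> Gm (dE f) = dD (Gm f)"
    using G by (simp_all add: dagger_functor_def)
  obtain g where g: "iso E g" "Src E g = Src E p" and pg: "p = Cmp E (dE g) g"
    using p unfolding iso_positive_def by blast
  have "Gm p = Cmp D (dD (Gm g)) (Gm g)"
    unfolding pg using g by (simp add: functor_cmp[OF Gf] Gdag)
  then show ?thesis
    using p g functor_iso[OF Gf] functor_arr[OF Gf] functor_src[OF Gf] functor_tgt[OF Gf]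
    unfolding iso_positive_def by (metis iso_arr)
qed

lemma (in dagger_category) dagger_equivalent_reflects_positivity:
  assumes E: "dagger_cat E dE" and DE: "dagger_equivalent D dag E dE"
    and E_pos: "\<And>e. self_adjoint E dE e \<Longrightarrow> automorphism E e \<Longrightarrow> iso_positive E dE e"
    and f: "self_adjoint D dag f" "automorphism D f"
  shows "iso_positive D dag f"
proof -
  obtain Fo Fm Go Gm \<eta> where F: "dagger_functor D dag E dE Fo Fm" and G: "dagger_functor E dE D dag Go Gm"
    and \<eta>: "nat_trans D D id id (Go \<circ> Fo) (Gm \<circ> Fm) \<eta>" and \<eta>_unitary: "\<forall>a\<in>Obj D. unitary D dag (\<eta> a)"
    using DE unfolding dagger_equivalent_def by blast
  have Ff: "is_functor D E Fo Fm" and Gf: "is_functor E D Go Gm"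
    using F G by (simp_all add: dagger_functor_is_functor)
  define a where "a = Src D f"
  have f_arr: "f \<in> Arr D" "Src D f = a" "Tgt D f = a"
    using f by (simp_all add: a_def self_adjoint_def automorphism_def)
  have "iso_positive E dE (Fm f)"
    using f by (intro E_pos dagger_functor_self_adjoint[OF F] functor_automorphism[OF Ff])
  then have GFf: "iso_positive D dag (Gm (Fm f))"
    by (rule dagger_functor_iso_positive[OF E G])
  have \<eta>a: "unitary D dag (\<eta> a)" "\<eta> a \<in> Arr D" "Src D (\<eta> a) = a" "Tgt D (\<eta> a) = Go (Fo a)"
    using \<eta>_unitary nat_trans_component[OF \<eta>] f_arr by (auto simp: hom_iff)
  have "Cmp D (\<eta> a) f = Cmp D (Gm (Fm f)) (\<eta> a)"
    using nat_trans_naturality[OF \<eta> f_arr(1)] f_arr by simp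
  then have "f = Cmp D (inv_arr D (\<eta> a)) (Cmp D (Gm (Fm f)) (\<eta> a))"
    using \<eta>a f_arr by (metis inv_arr_cancel_left is_category unitary_def)
  moreover have "Tgt D (\<eta> a) = Src D (Gm (Fm f))"
    using functor_src[OF comp_functor[OF Ff Gf] f_arr(1)] \<eta>a f_arr by simp
  ultimately show ?thesis
    using iso_positive_unitary_conj[OF \<eta>a(1) GFf] by simp
qed

section \<open>The Hermitian completion\<close>

lemma Herm_simps [simp]:
  "Obj (Herm C do dm \<eta>) = herm_obj C do dm \<eta>"
  "(x, f, y) \<in> Arr (Herm C do dm \<eta>) \<longleftrightarrow>
     x \<in> herm_obj C do dm \<eta> \<and> y \<in> herm_obj C do dm \<eta> \<and> f \<in> hom C (fst x) (fst y)"
  "Src (Herm C do dm \<eta>) (x, f, y) = x"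
  "Tgt (Herm C do dm \<eta>) (x, f, y) = y"
  "Idn (Herm C do dm \<eta>) x = (x, Idn C (fst x), x)"
  "Cmp (Herm C do dm \<eta>) (y, g, z) (x, f, y') = (x, Cmp C g f, z)"
  by (simp_all add: Herm_def)

lemma herm_obj_iff [simp]:
  "(c, h) \<in> herm_obj C do dm \<eta> \<longleftrightarrow>
     c \<in> Obj C \<and> h \<in> hom C c (do c) \<and> iso C h \<and> Cmp C (dm h) (\<eta> c) = h"
  by (simp add: herm_obj_def)

lemma herm_dag_simp [simp]:
  "herm_dag C dm (x, f, y) = (y, Cmp C (inv_arr C (snd x)) (Cmp C (dm f) (snd y)), x)"
  by (simp add: herm_dag_def)

lemma Herm_category: "category C \<Longrightarrow> category (Herm C do dm \<eta>)"
  unfolding category_def[of "Herm C do dm \<eta>"]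
  by (intro conjI ballI impI) (auto simp: hom_iff herm_obj_def)

lemma Herm_is_inverse:
  "(x, f, y) \<in> Arr (Herm C do dm \<eta>) \<Longrightarrow> is_inverse C f k \<Longrightarrow>
    is_inverse (Herm C do dm \<eta>) (x, f, y) (y, k, x)"
  by (auto simp: is_inverse_def hom_iff)

lemma Herm_iso_iff:
  "iso (Herm C do dm \<eta>) (x, f, y) \<longleftrightarrow> (x, f, y) \<in> Arr (Herm C do dm \<eta>) \<and> iso C f"
proof
  assume "iso (Herm C do dm \<eta>) (x, f, y)"
  then obtain k where k: "is_inverse (Herm C do dm \<eta>) (x, f, y) k"
    and arr: "(x, f, y) \<in> Arr (Herm C do dm \<eta>)"
    unfolding iso_def by blast
  obtain y' k' x' where "k = (y', k', x')"
    using prod_cases3 by blast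
  then have "is_inverse C f k'"
    using k arr by (simp add: is_inverse_def hom_iff)
  then show "(x, f, y) \<in> Arr (Herm C do dm \<eta>) \<and> iso C f"
    using arr by (auto simp: iso_def hom_iff)
next
  assume "(x, f, y) \<in> Arr (Herm C do dm \<eta>) \<and> iso C f"
  then obtain k where "(x, f, y) \<in> Arr (Herm C do dm \<eta>)" "is_inverse C f k"
    unfolding iso_def by blast
  then show "iso (Herm C do dm \<eta>) (x, f, y)"
    unfolding iso_def by (blast intro: Herm_is_inverse)
qed

lemma Herm_inv_arr:
  "category C \<Longrightarrow> (x, f, y) \<in> Arr (Herm C do dm \<eta>) \<Longrightarrow> iso C f \<Longrightarrow>
    inv_arr (Herm C do dm \<eta>) (x, f, y) = (y, inv_arr C f, x)"
  by (meson Herm_category Herm_is_inverse inv_arr_eqI is_inverse_inv_arr)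

locale anti_involutive_category =
  fixes C :: "('o, 'm) cat" and do :: "'o \<Rightarrow> 'o" and dm :: "'m \<Rightarrow> 'm" and \<eta> :: "'o \<Rightarrow> 'm"
  assumes anti_involutive: "anti_involutive C do dm \<eta>"
begin

abbreviation "HermC \<equiv> Herm C do dm \<eta>"
abbreviation "herm_dagC \<equiv> herm_dag C dm"

lemma is_category [simp]: "category C"
  and d_functor: "is_functor C (op C) do dm"
  and \<eta>_nat_trans: "nat_trans C C id id (do \<circ> do) (dm \<circ> dm) \<eta>"
  using anti_involutive by (simp_all add: anti_involutive_def)

lemma dm_arr [simp]: "f \<in> Arr C \<Longrightarrow> dm f \<in> Arr C"
  and dm_src [simp]: "f \<in> Arr C \<Longrightarrow> Src C (dm f) = do (Tgt C f)"
  and dm_tgt [simp]: "f \<in> Arr C \<Longrightarrow> Tgt C (dm f) = do (Src C f)"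
  and dm_idn [simp]: "a \<in> Obj C \<Longrightarrow> dm (Idn C a) = Idn C (do a)"
  and dm_cmp [simp]: "f \<in> Arr C \<Longrightarrow> g \<in> Arr C \<Longrightarrow> Tgt C f = Src C g \<Longrightarrow>
     dm (Cmp C g f) = Cmp C (dm f) (dm g)"
  and dm_iso [simp]: "iso C f \<Longrightarrow> iso C (dm f)"
  and dm_inv_arr [simp]: "iso C f \<Longrightarrow> dm (inv_arr C f) = inv_arr C (dm f)"
  using d_functor by simp_all

lemma \<eta>_arr [simp]: "a \<in> Obj C \<Longrightarrow> \<eta> a \<in> Arr C"
  and \<eta>_src [simp]: "a \<in> Obj C \<Longrightarrow> Src C (\<eta> a) = a"
  and \<eta>_tgt [simp]: "a \<in> Obj C \<Longrightarrow> Tgt C (\<eta> a) = do (do a)"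
  using nat_trans_component[OF \<eta>_nat_trans] by (auto simp: hom_iff)

lemma \<eta>_naturality: "f \<in> Arr C \<Longrightarrow> Cmp C (\<eta> (Tgt C f)) f = Cmp C (dm (dm f)) (\<eta> (Src C f))"
  using nat_trans_naturality[OF \<eta>_nat_trans] by simp

lemma herm_form_\<eta>:
  assumes "(c, h) \<in> herm_obj C do dm \<eta>"
  shows "Cmp C (dm (inv_arr C h)) h = \<eta> c"
proof -
  have h: "iso C h" "h \<in> hom C c (do c)" "c \<in> Obj C" and h_eq: "Cmp C (dm h) (\<eta> c) = h"
    using assms by auto
  have "Cmp C (dm (inv_arr C h)) h = Cmp C (inv_arr C (dm h)) (Cmp C (dm h) (\<eta> c))"
    using h by (simp add: h_eq)
  also have "\<dots> = \<eta> c"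
    using h by (intro inv_arr_cancel_left) (auto simp: hom_iff)
  finally show ?thesis .
qed

lemma Herm_arrE:
  assumes "e \<in> Arr HermC"
  obtains c1 h1 f c2 h2 where "e = ((c1, h1), f, (c2, h2))"
    "(c1, h1) \<in> herm_obj C do dm \<eta>" "(c2, h2) \<in> herm_obj C do dm \<eta>" "f \<in> hom C c1 c2"
  using assms by (cases e) (auto simp: Herm_def)

lemma herm_dag_arr:
  assumes "e \<in> Arr HermC"
  shows "herm_dagC e \<in> Arr HermC" "Src HermC (herm_dagC e) = Tgt HermC e"
    "Tgt HermC (herm_dagC e) = Src HermC e"
  using assms by (elim Herm_arrE; simp add: hom_iff)+

lemma herm_dag_idn: "x \<in> Obj HermC \<Longrightarrow> herm_dagC (Idn HermC x) = Idn HermC x"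
  by (cases x) (auto simp: hom_iff)

lemma herm_dag_cmp:
  assumes "e \<in> Arr HermC" "e' \<in> Arr HermC" "Tgt HermC e = Src HermC e'"
  shows "herm_dagC (Cmp HermC e' e) = Cmp HermC (herm_dagC e) (herm_dagC e')"
  using assms by (elim Herm_arrE) (auto simp: hom_iff)

lemma herm_dag_herm_dag:
  assumes "e \<in> Arr HermC"
  shows "herm_dagC (herm_dagC e) = e"
  using assms
proof (elim Herm_arrE)
  fix c1 h1 f c2 h2
  assume e: "e = ((c1, h1), f, (c2, h2))" and x: "(c1, h1) \<in> herm_obj C do dm \<eta>"
    and y: "(c2, h2) \<in> herm_obj C do dm \<eta>" and f: "f \<in> hom C c1 c2"
  have h: "iso C h1" "h1 \<in> hom C c1 (do c1)" "iso C h2" "h2 \<in> hom C c2 (do c2)" "c1 \<in> Obj C" "c2 \<in> Obj C"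
    and h2_eq: "Cmp C (dm h2) (\<eta> c2) = h2"
    using x y by auto
  have "Cmp C (inv_arr C h2) (Cmp C (dm (Cmp C (inv_arr C h1) (Cmp C (dm f) h2))) h1)
      = Cmp C (inv_arr C h2) (Cmp C (dm h2) (Cmp C (dm (dm f)) (Cmp C (dm (inv_arr C h1)) h1)))"
    using h f by (simp add: hom_iff del: dm_inv_arr)
  also have "\<dots> = Cmp C (inv_arr C h2) (Cmp C (dm h2) (Cmp C (\<eta> c2) f))"
    using h f \<eta>_naturality[of f] by (simp add: herm_form_\<eta>[OF x] hom_iff del: dm_inv_arr)
  also have "\<dots> = Cmp C (inv_arr C h2) (Cmp C (Cmp C (dm h2) (\<eta> c2)) f)"
    using h f by (simp add: hom_iff del: dm_inv_arr)
  also have "\<dots> = f"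
    using h f by (simp add: h2_eq hom_iff)
  finally show "herm_dagC (herm_dagC e) = e"
    using e by simp
qed

lemma Herm_dagger_cat: "dagger_cat HermC herm_dagC"
  unfolding dagger_cat_def is_functor_def
proof (intro conjI ballI impI)
  show "category HermC" "category (op HermC)"
    using Herm_category[OF is_category] category_op by auto
qed (simp_all add: hom_iff herm_dag_arr herm_dag_idn[simplified] herm_dag_cmp herm_dag_herm_dag)

lemma Herm_self_adjoint_automorphism_iso_positive:
  assumes sa: "self_adjoint HermC herm_dagC e" and aut: "automorphism HermC e"
  shows "iso_positive HermC herm_dagC e"
proof -
  have e_arr: "e \<in> Arr HermC" and e_endo: "Src HermC e = Tgt HermC e" and e_iso: "iso HermC e"
    using aut by (auto simp: automorphism_def)
  obtain c h f where e: "e = ((c, h), f, (c, h))" and x: "(c, h) \<in> herm_obj C do dm \<eta>"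
    and f: "f \<in> hom C c c"
    using e_arr e_endo by (elim Herm_arrE) auto
  have f_iso: "iso C f"
    using e_iso by (simp add: e Herm_iso_iff)
  have h: "iso C h" "h \<in> hom C c (do c)" "c \<in> Obj C" and h_eq: "Cmp C (dm h) (\<eta> c) = h"
    using x by auto
  have "f = Cmp C (inv_arr C h) (Cmp C (dm f) h)"
    using sa by (simp add: e self_adjoint_def)
  then have "Cmp C h f = Cmp C h (Cmp C (inv_arr C h) (Cmp C (dm f) h))"
    by (rule arg_cong)
  also have "\<dots> = Cmp C (dm f) h"
    using h f by (simp add: hom_iff)
  finally have hf: "Cmp C h f = Cmp C (dm f) h" .
  define h' where "h' = Cmp C h f"
  have h': "h' \<in> hom C c (do c)" "iso C h'"
    using h f f_iso by (auto simp: h'_def hom_iff)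
  have "Cmp C (dm h') (\<eta> c) = Cmp C (dm f) (Cmp C (dm h) (\<eta> c))"
    using h f by (simp add: h'_def hom_iff)
  also have "\<dots> = h'"
    by (simp add: h_eq hf h'_def)
  finally have x': "(c, h') \<in> herm_obj C do dm \<eta>"
    using h h' by simp
  define g where "g = ((c, h), Idn C c, (c, h'))"
  have g_iso: "iso HermC g"
    using x x' h by (simp add: g_def Herm_iso_iff hom_iff)
  have "herm_dagC g = ((c, h'), f, (c, h))"
    using h f by (simp add: g_def h'_def hom_iff)
  then have "e = Cmp HermC (herm_dagC g) g"
    using h f by (simp add: g_def e hom_iff)
  moreover have "Src HermC g = Src HermC e"
    by (simp add: g_def e)
  ultimately show ?thesis
    unfolding iso_positive_def using e_arr e_endo g_iso by blast
qed

end

lemma (in dagger_category) herm_model_imp_positivity: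
  assumes "herm_model D dag C do dm \<eta>" and "self_adjoint D dag f" "automorphism D f"
  shows "iso_positive D dag f"
proof -
  interpret C: anti_involutive_category C do dm \<eta>
    using assms(1) by unfold_locales (simp add: herm_model_def)
  show ?thesis
    using assms(1) C.Herm_dagger_cat C.Herm_self_adjoint_automorphism_iso_positive assms(2,3)
    by (intro dagger_equivalent_reflects_positivity) (auto simp: herm_model_def)
qed

section \<open>A dagger category as a Hermitian completion of itself\<close>

context dagger_category
begin

abbreviation "HermD \<equiv> Herm D id dag (Idn D)"
abbreviation "herm_dagD \<equiv> herm_dag D dag"

lemma anti_involutive_dagger: "anti_involutive D id dag (Idn D)"
proof -
  have "is_functor D D (id \<circ> id) (dag \<circ> dag)"
    unfolding is_functor_def by (simp add: hom_iff)
  then show ?thesis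
    unfolding anti_involutive_def nat_trans_def
    using dag_functor id_functor[OF is_category] by (simp add: hom_iff)
qed

end

sublocale dagger_category \<subseteq> herm: anti_involutive_category D id dag "Idn D"
  by unfold_locales (fact anti_involutive_dagger)

context dagger_category
begin

lemma herm_obj_dagger_iff:
  "(a, h) \<in> herm_obj D id dag (Idn D) \<longleftrightarrow>
    self_adjoint D dag h \<and> automorphism D h \<and> Src D h = a"
  by (auto simp: self_adjoint_def automorphism_def hom_iff)

definition herm_embed_obj :: "'o \<Rightarrow> 'o \<times> 'm" where
  "herm_embed_obj a = (a, Idn D a)"

definition herm_embed :: "'m \<Rightarrow> ('o \<times> 'm) \<times> 'm \<times> ('o \<times> 'm)" where
  "herm_embed f = (herm_embed_obj (Src D f), f, herm_embed_obj (Tgt D f))"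

lemma herm_embed_dagger_functor: "dagger_functor D dag HermD herm_dagD herm_embed_obj herm_embed"
  unfolding dagger_functor_def is_functor_def
  using Herm_category[OF is_category]
  by (auto simp: herm_embed_def herm_embed_obj_def hom_iff)

end

locale positive_dagger_category = dagger_category D dag
  for D :: "('o, 'm) cat" and dag :: "'m \<Rightarrow> 'm" +
  assumes sa_aut_iso_positive: "self_adjoint D dag f \<Longrightarrow> automorphism D f \<Longrightarrow> iso_positive D dag f"
begin

text \<open>Taking the identity as the root of each trivial form makes \<open>herm_realize\<close> a strict
  left inverse of \<open>herm_embed\<close>, so that the unit of the equivalence is the identity.\<close>
definition herm_root :: "'o \<times> 'm \<Rightarrow> 'm" where
  "herm_root x = (if snd x = Idn D (fst x) then Idn D (fst x)
     else SOME g. iso D g \<and> Src D g = fst x \<and> snd x = Cmp D (dag g) g)"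

lemma herm_root:
  assumes "x \<in> Obj HermD"
  shows "iso D (herm_root x)" "Src D (herm_root x) = fst x"
    "snd x = Cmp D (dag (herm_root x)) (herm_root x)"
proof -
  obtain a h where x: "x = (a, h)"
    by fastforce
  have h: "self_adjoint D dag h" "automorphism D h" "Src D h = a"
    using assms unfolding x Herm_simps(1) herm_obj_dagger_iff by blast+
  then have a: "a \<in> Obj D"
    by (auto simp: automorphism_def)
  have "\<exists>g. iso D g \<and> Src D g = a \<and> h = Cmp D (dag g) g"
    using sa_aut_iso_positive[OF h(1,2)] h(3) unfolding iso_positive_def by blast
  then have "iso D (herm_root x) \<and> Src D (herm_root x) = a \<and> h = Cmp D (dag (herm_root x)) (herm_root x)"
  proof (cases "h = Idn D a")
    case True
    then show ?thesis
      using a by (simp add: herm_root_def x)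
  next
    case False
    then show ?thesis
      using someI_ex[OF \<open>\<exists>g. _\<close>] by (simp add: herm_root_def x)
  qed
  then show "iso D (herm_root x)" "Src D (herm_root x) = fst x"
    "snd x = Cmp D (dag (herm_root x)) (herm_root x)"
    by (simp_all add: x)
qed

lemma herm_root_embed [simp]: "herm_root (herm_embed_obj a) = Idn D a"
  by (simp add: herm_root_def herm_embed_obj_def)

definition herm_realize_obj :: "'o \<times> 'm \<Rightarrow> 'o" where
  "herm_realize_obj x = Tgt D (herm_root x)"

definition herm_realize :: "('o \<times> 'm) \<times> 'm \<times> ('o \<times> 'm) \<Rightarrow> 'm" where
  "herm_realize = (\<lambda>(x, f, y). Cmp D (herm_root y) (Cmp D f (inv_arr D (herm_root x))))"

definition herm_counit :: "'o \<times> 'm \<Rightarrow> ('o \<times> 'm) \<times> 'm \<times> ('o \<times> 'm)" where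
  "herm_counit x = (herm_embed_obj (herm_realize_obj x), inv_arr D (herm_root x), x)"

lemma herm_realize_obj [simp]: "x \<in> Obj HermD \<Longrightarrow> herm_realize_obj x \<in> Obj D"
  using herm_root by (simp add: herm_realize_obj_def)

lemma herm_realize_arr:
  assumes "e \<in> Arr HermD"
  shows "herm_realize e \<in> hom D (herm_realize_obj (Src HermD e)) (herm_realize_obj (Tgt HermD e))"
  using assms
proof (elim herm.Herm_arrE)
  fix c1 h1 f c2 h2
  assume "e = ((c1, h1), f, (c2, h2))" "(c1, h1) \<in> herm_obj D id dag (Idn D)"
    "(c2, h2) \<in> herm_obj D id dag (Idn D)" "f \<in> hom D c1 c2"
  then show ?thesis
    using herm_root[of "(c1, h1)"] herm_root[of "(c2, h2)"]
    by (simp add: herm_realize_def herm_realize_obj_def hom_iff)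
qed

lemma herm_realize_dag:
  assumes "e \<in> Arr HermD"
  shows "herm_realize (herm_dagD e) = dag (herm_realize e)"
  using assms
proof (elim herm.Herm_arrE)
  fix c1 h1 f c2 h2
  assume e: "e = ((c1, h1), f, (c2, h2))" and x: "(c1, h1) \<in> herm_obj D id dag (Idn D)"
    and y: "(c2, h2) \<in> herm_obj D id dag (Idn D)" and f: "f \<in> hom D c1 c2"
  define r1 r2 where "r1 = herm_root (c1, h1)" and "r2 = herm_root (c2, h2)"
  have r: "iso D r1" "Src D r1 = c1" "h1 = Cmp D (dag r1) r1"
    "iso D r2" "Src D r2 = c2" "h2 = Cmp D (dag r2) r2"
    using herm_root[of "(c1, h1)"] herm_root[of "(c2, h2)"] x y by (simp_all add: r1_def r2_def)
  have "herm_realize (herm_dagD e)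
      = Cmp D r1 (Cmp D (Cmp D (inv_arr D h1) (Cmp D (dag f) h2)) (inv_arr D r2))"
    by (simp add: e herm_realize_def r1_def r2_def)
  also have "\<dots> = Cmp D (inv_arr D (dag r1)) (Cmp D (dag f) (dag r2))"
    using r f by (simp add: hom_iff)
  also have "\<dots> = dag (Cmp D r2 (Cmp D f (inv_arr D r1)))"
    using r(1,2,4,5) f by (simp add: hom_iff)
  also have "\<dots> = dag (herm_realize e)"
    by (simp add: e herm_realize_def r1_def r2_def)
  finally show ?thesis .
qed

lemma herm_realize_cmp:
  assumes "e \<in> Arr HermD" "e' \<in> Arr HermD" "Tgt HermD e = Src HermD e'"
  shows "herm_realize (Cmp HermD e' e) = Cmp D (herm_realize e') (herm_realize e)"
  using assms by (elim herm.Herm_arrE) (auto simp: herm_realize_def hom_iff herm_root(1,2))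

lemma herm_realize_dagger_functor: "dagger_functor HermD herm_dagD D dag herm_realize_obj herm_realize"
  unfolding dagger_functor_def is_functor_def
proof (intro conjI ballI impI)
  show "category HermD"
    by (rule Herm_category[OF is_category])
next
  fix x assume "x \<in> Obj HermD"
  then show "herm_realize (Idn HermD x) = Idn D (herm_realize_obj x)"
    using herm_root[of x] by (cases x) (simp add: herm_realize_def herm_realize_obj_def)
qed (simp_all add: herm_realize_arr herm_realize_cmp herm_realize_dag)

lemmas herm_embed_functor = dagger_functor_is_functor[OF herm_embed_dagger_functor]
lemmas herm_realize_functor = dagger_functor_is_functor[OF herm_realize_dagger_functor]

lemma herm_realize_embed_obj [simp]: "a \<in> Obj D \<Longrightarrow> herm_realize_obj (herm_embed_obj a) = a"
  by (simp add: herm_realize_obj_def)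

lemma herm_realize_embed [simp]: "f \<in> Arr D \<Longrightarrow> herm_realize (herm_embed f) = f"
  by (simp add: herm_realize_def herm_embed_def)

lemma herm_unit_nat_trans:
  "nat_trans D D id id (herm_realize_obj \<circ> herm_embed_obj) (herm_realize \<circ> herm_embed) (Idn D)"
  unfolding nat_trans_def
  using id_functor[OF is_category] comp_functor[OF herm_embed_functor herm_realize_functor]
  by (simp add: hom_iff)

lemma herm_counit_nat_trans:
  "nat_trans HermD HermD (herm_embed_obj \<circ> herm_realize_obj) (herm_embed \<circ> herm_realize) id id herm_counit"
  unfolding nat_trans_def
proof (intro conjI ballI)
  show "is_functor HermD HermD (herm_embed_obj \<circ> herm_realize_obj) (herm_embed \<circ> herm_realize)"
    by (rule comp_functor[OF herm_realize_functor herm_embed_functor])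
  show "is_functor HermD HermD id id"
    by (rule id_functor[OF Herm_category[OF is_category]])
next
  fix x assume "x \<in> Obj HermD"
  then show "herm_counit x \<in> hom HermD ((herm_embed_obj \<circ> herm_realize_obj) x) (id x)"
    using herm_root[of x] by (simp add: herm_counit_def hom_iff herm_realize_obj_def herm_embed_obj_def)
next
  fix e assume "e \<in> Arr HermD"
  then show "Cmp HermD (herm_counit (Tgt HermD e)) ((herm_embed \<circ> herm_realize) e) =
      Cmp HermD (id e) (herm_counit (Src HermD e))"
    by (elim herm.Herm_arrE)
      (simp add: herm_counit_def herm_embed_def herm_realize_def herm_realize_obj_def hom_iff herm_root(1,2))
qed

lemma herm_counit_unitary:
  assumes x: "x \<in> Obj HermD"
  shows "unitary HermD herm_dagD (herm_counit x)"
proof -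
  define r where "r = herm_root x"
  have r: "iso D r" "Src D r = fst x" "snd x = Cmp D (dag r) r"
    using herm_root[OF x] by (simp_all add: r_def)
  have counit: "herm_counit x = (herm_embed_obj (Tgt D r), inv_arr D r, x)"
    by (simp add: herm_counit_def herm_realize_obj_def r_def)
  have arr: "herm_counit x \<in> Arr HermD"
    using x r by (simp add: counit hom_iff herm_embed_obj_def)
  have "herm_dagD (herm_counit x) = (x, r, herm_embed_obj (Tgt D r))"
    using r by (simp add: counit herm_embed_obj_def)
  also have "\<dots> = inv_arr HermD (herm_counit x)"
    using arr r by (simp add: counit Herm_inv_arr)
  finally show ?thesis
    using arr r by (simp add: unitary_def counit Herm_iso_iff)
qed

theorem herm_model_self: "herm_model D dag D id dag (Idn D)"
  unfolding herm_model_def dagger_equivalent_def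
  using anti_involutive_dagger herm_embed_dagger_functor herm_realize_dagger_functor
    herm_unit_nat_trans unitary_idn herm_counit_nat_trans herm_counit_unitary
  by blast

end

theorem mainTheorem10:
  fixes D :: "('o, 'm) cat" and dag :: "'m \<Rightarrow> 'm"
  assumes "dagger_cat D dag"
  shows
    "((\<forall>(C :: ('c, 'n) cat) do dm \<eta>. herm_model D dag C do dm \<eta> \<longrightarrow>
         (\<forall>f. self_adjoint D dag f \<and> automorphism D f \<longrightarrow> iso_positive D dag f)) \<and>
      ((\<forall>f. self_adjoint D dag f \<and> automorphism D f \<longrightarrow> iso_positive D dag f) \<longrightarrow>
         (\<exists>(C :: ('o, 'm) cat) do dm \<eta>. herm_model D dag C do dm \<eta>)))
     \<and>
     (minimal D dag \<longleftrightarrow> (\<forall>f. iso_positive D dag f \<longrightarrow> aut_positive D dag f))"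
proof -
  interpret dagger_category D dag
    by unfold_locales (fact assms)
  have "\<forall>(C :: ('c, 'n) cat) do dm \<eta>. herm_model D dag C do dm \<eta> \<longrightarrow>
      (\<forall>f. self_adjoint D dag f \<and> automorphism D f \<longrightarrow> iso_positive D dag f)"
    using herm_model_imp_positivity by blast
  moreover have "(\<forall>f. self_adjoint D dag f \<and> automorphism D f \<longrightarrow> iso_positive D dag f) \<longrightarrow>
      (\<exists>(C :: ('o, 'm) cat) do dm \<eta>. herm_model D dag C do dm \<eta>)"
  proof
    assume "\<forall>f. self_adjoint D dag f \<and> automorphism D f \<longrightarrow> iso_positive D dag f"
    then interpret positive_dagger_category D dag
      by unfold_locales blast
    show "\<exists>(C :: ('o, 'm) cat) do dm \<eta>. herm_model D dag C do dm \<eta>"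
      using herm_model_self by blast
  qed
  ultimately show ?thesis
    using minimal_iff_iso_positive_imp_aut_positive by blast
qed

end
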